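(* The expected number of rows of the (unshifted) Ferrers diagram underlying a uniformly random type-B permutation tableau of size $n$, i.e. the expected number of south steps on its boundary, equals $\dfrac{n+1}{4}$.
   Context: A Ferrers diagram is a left-justified array of cells whose row lengths weakly decrease from top to bottom (rows of length $0$ are allowed). Its half-perimeter is the number of rows plus the number of columns. Its southeast boundary, traversed from the northeast corner to the southwest corner, consists of $n$ unit steps, each south or west; south steps correspond to rows and west steps to columns. If the diagram has $c$ columns, the shifted Ferrers diagram is obtained by inserting $c$ new left-justified rows above it, of lengths $c,c-1,\dots,1$ from top to bottom; the rightmost cell of each inserted row is a diagonal cell. A type-B permutation tableau of size $n$ is a filling of a shifted Ferrers diagram of half-perimeter $n$ with $0$'s and $1$'s such that: (1) every column contains at least one $1$; (2) no $0$ has both a $1$ above it in its column and a $1$ to its left in its row; (3) if a diagonal cell contains $0$ then every cell of its row contains $0$. Only the rows of the original (unshifted) Ferrers diagram are counted, not the inserted rows. Let $\mathcal{B}_n$ be the set of such tableaux with the uniform probability measure $\mathbb{P}_n$ and expectation $\mathbb{E}_n$. *)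

theory Defs
  imports "HOL-Probability.Probability"
begin

text \<open>
  A Ferrers diagram of half-perimeter n is encoded by its southeast
  boundary word w (length n), read from the northeast corner to the southwest
  corner; w ! i = True means step i is a south step (a row), False a west
  step (a column).  Rows of the unshifted diagram are labelled Inl a (a the
  position of its south step), columns by the position b of their west step.
  Inserted (staircase) rows are labelled Inr b, where b is the column of the
  row's diagonal cell (Inr b, b); that row contains the columns b' \<ge> b.
  Column b'' lies to the left of column b' iff b' < b''.
\<close>

type_synonym brow = "nat + nat"
type_synonym bcell = "brow \<times> nat"

definition south_steps :: "bool list \<Rightarrow> nat" where
  "south_steps w = length (filter id w)"

definition shifted_cells :: "bool list \<Rightarrow> bcell set" where
  "shifted_cells w =
     {(Inl a, b) | a b. a < b \<and> b < length w \<and> w ! a \<and> \<not> w ! b}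
   \<union> {(Inr b, b') | b b'. b \<le> b' \<and> b' < length w \<and> \<not> w ! b \<and> \<not> w ! b'}"

text \<open>All inserted rows lie above all original rows; original rows are ordered by the
  position of their south step; within each column the diagonal cell is the
  topmost inserted cell (the standard type-B shifted diagram).\<close>

fun row_above :: "brow \<Rightarrow> brow \<Rightarrow> bool" where
  "row_above (Inr b) (Inr b') = (b' < b)"
| "row_above (Inr b) (Inl a) = True"
| "row_above (Inl a) (Inr b) = False"
| "row_above (Inl a) (Inl a') = (a < a')"

text \<open>A filling is given by the set T of cells containing 1.\<close>

definition is_typeB_tableau :: "bool list \<Rightarrow> bcell set \<Rightarrow> bool" where
  "is_typeB_tableau w T \<longleftrightarrow>
     T \<subseteq> shifted_cells w
   \<and> (\<forall>b < length w. \<not> w ! b \<longrightarrow> (\<exists>r. (r, b) \<in> T))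
   \<and> (\<forall>r b. (r, b) \<in> shifted_cells w - T \<longrightarrow>
         \<not> ((\<exists>r'. (r', b) \<in> T \<and> row_above r' r) \<and> (\<exists>b''. (r, b'') \<in> T \<and> b < b'')))
   \<and> (\<forall>b. (Inr b, b) \<in> shifted_cells w \<and> (Inr b, b) \<notin> T \<longrightarrow>
         (\<forall>b'. (Inr b, b') \<notin> T))"

definition typeB_tableaux :: "nat \<Rightarrow> (bool list \<times> bcell set) set" where
  "typeB_tableaux n = {(w, T). length w = n \<and> is_typeB_tableau w T}"

end

theory Submission
  imports Defs
begin

text \<open>
  Tableaux of size n+1 arise from those of size n by appending a last boundary step.  A south
  step adds an empty bottom row.  A west step adds a new leftmost column together with its
  inserted row, and the 1s of that column may go exactly into a nonempty set of rows that are
  unrestricted (no 0 has a 1 above it, and the diagonal cell of an inserted row is 1), the new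
  inserted row included.  Afterwards a row is unrestricted iff it received a 1 or lies above
  every row that did.  Weighting a tableau with u unrestricted rows by y^u, its children
  therefore carry total weight 2y(1+y)^u, so the generating function satisfies
  A_{n+1}(y) = 2y A_n(1+y), i.e. A_n(y) = 2^n y(y+1)...(y+n-1); the same recursion with the
  number of rows as an extra factor gives 4 C_n(y) = 2^n n (2y+n-1) y(y+1)...(y+n-2).  At
  y = 1 there are 2^n n! tableaux with 2^n (n+1)!/4 rows in total.
\<close>

section \<open>Subsets of a finite set\<close>

lemma sum_power_card_Pow:
  fixes y :: "'a :: comm_semiring_1"
  assumes "finite A"
  shows "(\<Sum>X\<in>Pow A. y ^ card X) = (1 + y) ^ card A"
  using prod_add[OF assms, of "\<lambda>_. y" "\<lambda>_. 1"] by (simp add: add.commute)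

lemma sum_power_card_not_preceded:
  fixes f :: "'a \<Rightarrow> 'b :: linorder" and y :: "'c :: comm_ring_1"
  assumes "finite F" and "inj_on f F"
  shows "(\<Sum>R\<in>Pow F - {{}}. y ^ card {x \<in> F. x \<in> R \<or> (\<forall>x'\<in>R. \<not> f x' < f x)})
           = y * (1 + y) ^ card F - y ^ Suc (card F)"
  using assms
proof (induction F rule: finite_ranking_induct[where f = f])
  case empty
  then show ?case by simp
next
  case (insert m S)
  show ?case
  proof (cases "m \<in> S")
    case True
    with insert show ?thesis by (simp add: insert_absorb)
  next
    case m_new: False
    let ?kept = "\<lambda>F R. {x \<in> F. x \<in> R \<or> (\<forall>x'\<in>R. \<not> f x' < f x)}"
    have below: "f x < f m" if "x \<in> S" for x
      using insert.hyps(2)[OF that] insert.prems that m_new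
      by (metis inj_on_eq_iff insertCI order_le_less)
    have IH: "(\<Sum>R\<in>Pow S - {{}}. y ^ card (?kept S R)) = y * (1 + y) ^ card S - y ^ Suc (card S)"
      using insert.IH insert.prems by (simp add: inj_on_insert)
    have kept_old: "?kept (insert m S) R = ?kept S R" if "R \<in> Pow S - {{}}" for R
      using that below m_new by fastforce
    have card_new: "card (?kept (insert m S) (insert m R)) = Suc (card (?kept S R))"
      if "R \<in> Pow S" for R
    proof -
      have "?kept (insert m S) (insert m R) = insert m (?kept S R)"
        using that below by fastforce
      then show ?thesis
        using insert.hyps(1) m_new by simp
    qed
    have split: "Pow (insert m S) - {{}} = (Pow S - {{}}) \<union> insert m ` Pow S"
      by (auto simp: Pow_insert)
    have "(\<Sum>R\<in>Pow (insert m S) - {{}}. y ^ card (?kept (insert m S) R))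
        = (\<Sum>R\<in>Pow S - {{}}. y ^ card (?kept (insert m S) R))
          + (\<Sum>R\<in>insert m ` Pow S. y ^ card (?kept (insert m S) R))"
      unfolding split using insert.hyps(1) m_new by (intro sum.union_disjoint) auto
    also have "(\<Sum>R\<in>insert m ` Pow S. y ^ card (?kept (insert m S) R))
        = (\<Sum>R\<in>Pow S. y ^ card (?kept (insert m S) (insert m R)))"
      using m_new by (intro sum.reindex_cong[of "insert m"]) (auto simp: inj_on_def)
    also have "\<dots> = (\<Sum>R\<in>Pow S. y * y ^ card (?kept S R))"
      using card_new by (intro sum.cong) simp_all
    also have "(\<Sum>R\<in>Pow S - {{}}. y ^ card (?kept (insert m S) R))
        = (\<Sum>R\<in>Pow S - {{}}. y ^ card (?kept S R))"
      using kept_old by (intro sum.cong) simp_all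
    also have "Pow S = insert {} (Pow S - {{}})" by blast
    finally show ?thesis
      using insert.hyps(1) m_new
      by (simp add: IH sum.insert_remove sum_distrib_left[symmetric] algebra_simps)
  qed
qed

section \<open>Cells and rows of a shifted diagram\<close>

definition is_row :: "bool list \<Rightarrow> brow \<Rightarrow> bool" where
  "is_row w r = (case r of Inl a \<Rightarrow> a < length w \<and> w ! a | Inr b \<Rightarrow> b < length w \<and> \<not> w ! b)"

lemma mem_shifted_cells_iff:
  "(r, b) \<in> shifted_cells w \<longleftrightarrow> b < length w \<and> \<not> w ! b \<and>
     (case r of Inl a \<Rightarrow> a < b \<and> w ! a | Inr c \<Rightarrow> c \<le> b \<and> \<not> w ! c)"
  by (cases r) (auto simp: shifted_cells_def)

lemma shifted_cellsD: "(r, b) \<in> shifted_cells w \<Longrightarrow> b < length w \<and> is_row w r"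
  by (cases r) (auto simp: mem_shifted_cells_iff is_row_def)

lemma diagonal_mem_shifted_cells: "is_row w (Inr b) \<Longrightarrow> (Inr b, b) \<in> shifted_cells w"
  by (simp add: mem_shifted_cells_iff is_row_def)

lemma not_is_row_length: "\<not> is_row w (Inl (length w))" "\<not> is_row w (Inr (length w))"
  by (auto simp: is_row_def)

lemma is_row_snoc:
  "is_row (w @ [s]) r \<longleftrightarrow> is_row w r \<or> r = (if s then Inl (length w) else Inr (length w))"
  by (cases r) (auto simp: is_row_def nth_append less_Suc_eq)

lemma finite_rows: "finite (Collect (is_row w))"
proof (rule finite_subset)
  show "Collect (is_row w) \<subseteq> Inl ` {..<length w} \<union> Inr ` {..<length w}"
  proof
    fix r
    assume "r \<in> Collect (is_row w)"
    then show "r \<in> Inl ` {..<length w} \<union> Inr ` {..<length w}"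
      by (cases r) (auto simp: is_row_def)
  qed
qed simp

lemma shifted_cells_snoc_True: "shifted_cells (w @ [True]) = shifted_cells w"
  by (auto simp: mem_shifted_cells_iff nth_append less_Suc_eq split: sum.splits)

lemma mem_shifted_cells_snoc_False_iff:
  "(r, b) \<in> shifted_cells (w @ [False]) \<longleftrightarrow>
     (r, b) \<in> shifted_cells w \<or> (b = length w \<and> (r = Inr (length w) \<or> is_row w r))"
  by (cases r) (auto simp: mem_shifted_cells_iff nth_append less_Suc_eq is_row_def)

fun row_rank :: "brow \<Rightarrow> int" where
  "row_rank (Inl a) = int a"
| "row_rank (Inr b) = - int b - 1"

lemma row_above_iff_row_rank: "row_above r s \<longleftrightarrow> row_rank r < row_rank s"
  by (cases r; cases s) auto

lemma inj_row_rank: "inj row_rank"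
  by (rule injI) (auto elim!: row_rank.elims)

lemma row_above_new_inserted_row: "is_row w r \<Longrightarrow> row_above (Inr (length w)) r"
  by (cases r) (auto simp: is_row_def)

section \<open>Appending a boundary step\<close>

definition every_column_has_one :: "bool list \<Rightarrow> bcell set \<Rightarrow> bool" where
  "every_column_has_one w T \<longleftrightarrow> (\<forall>b < length w. \<not> w ! b \<longrightarrow> (\<exists>r. (r, b) \<in> T))"

definition no_forbidden_zero :: "bool list \<Rightarrow> bcell set \<Rightarrow> bool" where
  "no_forbidden_zero w T \<longleftrightarrow> (\<forall>r b. (r, b) \<in> shifted_cells w - T \<longrightarrow>
     \<not> ((\<exists>r'. (r', b) \<in> T \<and> row_above r' r) \<and> (\<exists>b''. (r, b'') \<in> T \<and> b < b'')))"

definition diagonal_zero_rule :: "bool list \<Rightarrow> bcell set \<Rightarrow> bool" where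
  "diagonal_zero_rule w T \<longleftrightarrow> (\<forall>b. (Inr b, b) \<in> shifted_cells w \<and> (Inr b, b) \<notin> T \<longrightarrow>
     (\<forall>b'. (Inr b, b') \<notin> T))"

lemma is_typeB_tableau_iff:
  "is_typeB_tableau w T \<longleftrightarrow> T \<subseteq> shifted_cells w \<and> every_column_has_one w T
     \<and> no_forbidden_zero w T \<and> diagonal_zero_rule w T"
  by (simp add: is_typeB_tableau_def every_column_has_one_def no_forbidden_zero_def
      diagonal_zero_rule_def)

lemma is_typeB_tableau_snoc_True: "is_typeB_tableau (w @ [True]) T \<longleftrightarrow> is_typeB_tableau w T"
  by (auto simp: is_typeB_tableau_def shifted_cells_snoc_True nth_append less_Suc_eq)

definition no_one_above_zero :: "bool list \<Rightarrow> bcell set \<Rightarrow> brow \<Rightarrow> bool" where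
  "no_one_above_zero w T r \<longleftrightarrow>
     (\<forall>b r'. (r, b) \<in> shifted_cells w - T \<longrightarrow> (r', b) \<in> T \<longrightarrow> \<not> row_above r' r)"

text \<open>The rows that may receive a 1 in a new leftmost column.\<close>

definition unrestricted_rows :: "bool list \<Rightarrow> bcell set \<Rightarrow> brow set" where
  "unrestricted_rows w T =
     {r. is_row w r \<and> no_one_above_zero w T r \<and> (\<forall>b. r = Inr b \<longrightarrow> (Inr b, b) \<in> T)}"

lemma finite_unrestricted_rows: "finite (unrestricted_rows w T)"
  by (rule finite_subset[OF _ finite_rows]) (auto simp: unrestricted_rows_def)

lemma every_column_has_one_snoc_False:
  assumes "T \<subseteq> shifted_cells w"
  shows "every_column_has_one (w @ [False]) (T \<union> R \<times> {length w}) \<longleftrightarrow>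
    every_column_has_one w T \<and> R \<noteq> {}"
proof -
  have "(r, length w) \<notin> T" for r
    using assms shifted_cellsD by blast
  then show ?thesis
    by (auto simp: every_column_has_one_def nth_append less_Suc_eq)
qed

lemma no_forbidden_zero_snoc_False:
  assumes "T \<subseteq> shifted_cells w"
  shows "no_forbidden_zero (w @ [False]) (T \<union> R \<times> {length w}) \<longleftrightarrow>
    no_forbidden_zero w T \<and> (\<forall>r\<in>R. no_one_above_zero w T r)"
    (is "?new \<longleftrightarrow> ?old \<and> ?R_rows")
proof
  let ?n = "length w" and ?T = "T \<union> R \<times> {length w}"
  have old_cell: "(r, b) \<in> shifted_cells (w @ [False]) - ?T \<and> b < ?n"
    if "(r, b) \<in> shifted_cells w - T" for r b
    using that shifted_cellsD by (auto simp: mem_shifted_cells_snoc_False_iff)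
  assume ?new
  then show "?old \<and> ?R_rows"
    unfolding no_forbidden_zero_def no_one_above_zero_def using old_cell by blast
next
  let ?n = "length w" and ?T = "T \<union> R \<times> {length w}"
  assume old: "?old \<and> ?R_rows"
  show ?new
    unfolding no_forbidden_zero_def
  proof (intro allI impI notI)
    fix r b
    assume zero: "(r, b) \<in> shifted_cells (w @ [False]) - ?T"
      and "(\<exists>r'. (r', b) \<in> ?T \<and> row_above r' r) \<and> (\<exists>b''. (r, b'') \<in> ?T \<and> b < b'')"
    then obtain r' b'' where r': "(r', b) \<in> ?T" "row_above r' r"
      and b'': "(r, b'') \<in> ?T" "b < b''"
      by blast
    have "b < ?n"
      using b'' assms shifted_cellsD by fastforce
    then have "(r, b) \<in> shifted_cells w - T" "(r', b) \<in> T"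
      using zero r' by (auto simp: mem_shifted_cells_snoc_False_iff)
    moreover have "(r, b'') \<in> T \<or> r \<in> R"
      using b'' by blast
    ultimately show False
      using old r'(2) b''(2) unfolding no_forbidden_zero_def no_one_above_zero_def by blast
  qed
qed

lemma diagonal_zero_rule_snoc_False:
  assumes T: "T \<subseteq> shifted_cells w" and R: "R \<subseteq> insert (Inr (length w)) (Collect (is_row w))"
  shows "diagonal_zero_rule (w @ [False]) (T \<union> R \<times> {length w}) \<longleftrightarrow> diagonal_zero_rule w T \<and>
    (\<forall>b. Inr b \<in> R \<longrightarrow> b \<noteq> length w \<longrightarrow> (Inr b, b) \<in> T)"
    (is "?new \<longleftrightarrow> ?old \<and> ?R_rows")
proof -
  let ?n = "length w" and ?T = "T \<union> R \<times> {length w}"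
  have T_lt: "b < ?n \<and> is_row w r" if "(r, b) \<in> T" for r b
    using that T shifted_cellsD by blast
  have old_diagonal: "(Inr b, b) \<in> shifted_cells (w @ [False]) \<and> b < ?n"
    if "(Inr b, b) \<in> shifted_cells w" for b
    using that shifted_cellsD by (auto simp: mem_shifted_cells_snoc_False_iff)
  have R_diagonal: "(Inr b, b) \<in> shifted_cells w \<and> b < ?n" if "Inr b \<in> R" "b \<noteq> ?n" for b
    using that R diagonal_mem_shifted_cells shifted_cellsD by blast
  show ?thesis
  proof
    assume ?new
    then show "?old \<and> ?R_rows"
      unfolding diagonal_zero_rule_def using old_diagonal R_diagonal by blast
  next
    assume old: "?old \<and> ?R_rows"
    have "(Inr b, b') \<notin> ?T"
      if "(Inr b, b) \<in> shifted_cells (w @ [False])" "(Inr b, b) \<notin> ?T" for b b'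
    proof (cases "b = ?n")
      case True
      then show ?thesis
        using that T_lt not_is_row_length by blast
    next
      case False
      then have "(Inr b, b) \<in> shifted_cells w - T"
        using that by (auto simp: mem_shifted_cells_snoc_False_iff)
      then show ?thesis
        using old False T_lt unfolding diagonal_zero_rule_def by blast
    qed
    then show ?new
      unfolding diagonal_zero_rule_def by blast
  qed
qed

lemma is_typeB_tableau_snoc_False:
  assumes "T \<subseteq> shifted_cells w" and "R \<subseteq> insert (Inr (length w)) (Collect (is_row w))"
  shows "is_typeB_tableau (w @ [False]) (T \<union> R \<times> {length w}) \<longleftrightarrow>
    is_typeB_tableau w T \<and> R \<noteq> {} \<and> R \<subseteq> insert (Inr (length w)) (unrestricted_rows w T)"
proof -
  have "T \<union> R \<times> {length w} \<subseteq> shifted_cells (w @ [False])"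
    using assms shifted_cellsD by (fastforce simp: mem_shifted_cells_snoc_False_iff)
  moreover have "no_one_above_zero w T (Inr (length w))"
    using shifted_cellsD not_is_row_length by (blast intro: no_one_above_zero_def[THEN iffD2])
  ultimately show ?thesis
    using assms unfolding is_typeB_tableau_iff every_column_has_one_snoc_False[OF assms(1)]
      no_forbidden_zero_snoc_False[OF assms(1)] diagonal_zero_rule_snoc_False[OF assms]
    by (auto simp: unrestricted_rows_def)
qed

lemma unrestricted_rows_snoc_True:
  assumes "T \<subseteq> shifted_cells w"
  shows "unrestricted_rows (w @ [True]) T = insert (Inl (length w)) (unrestricted_rows w T)"
proof -
  have "(Inl (length w), b) \<notin> shifted_cells w" for b
    using shifted_cellsD not_is_row_length by blast
  then show ?thesis
    by (auto simp: unrestricted_rows_def no_one_above_zero_def shifted_cells_snoc_True is_row_snoc)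
qed

lemma card_unrestricted_rows_snoc_True:
  assumes "T \<subseteq> shifted_cells w"
  shows "card (unrestricted_rows (w @ [True]) T) = Suc (card (unrestricted_rows w T))"
proof -
  have "Inl (length w) \<notin> unrestricted_rows w T"
    using not_is_row_length by (simp add: unrestricted_rows_def)
  then show ?thesis
    by (simp add: unrestricted_rows_snoc_True[OF assms] finite_unrestricted_rows)
qed

lemma no_one_above_zero_snoc_False:
  assumes T: "T \<subseteq> shifted_cells w" and row: "is_row w r"
  shows "no_one_above_zero (w @ [False]) (T \<union> R \<times> {length w}) r \<longleftrightarrow>
    no_one_above_zero w T r \<and> (r \<notin> R \<longrightarrow> (\<forall>r'\<in>R. \<not> row_above r' r))"
    (is "?new \<longleftrightarrow> ?old \<and> ?R_rows")
proof
  let ?n = "length w" and ?w = "w @ [False]" and ?T = "T \<union> R \<times> {length w}"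
  have T_lt: "b < ?n" if "(r', b) \<in> T" for r' b
    using that T shifted_cellsD by blast
  have "(r, b) \<in> shifted_cells ?w - ?T" if "(r, b) \<in> shifted_cells w - T" for b
    using that shifted_cellsD[of r b w] by (auto simp: mem_shifted_cells_snoc_False_iff)
  moreover have "(r, ?n) \<in> shifted_cells ?w - ?T" if "r \<notin> R"
    using that row T_lt by (auto simp: mem_shifted_cells_snoc_False_iff)
  moreover assume ?new
  ultimately show "?old \<and> ?R_rows"
    unfolding no_one_above_zero_def by blast
next
  let ?n = "length w" and ?w = "w @ [False]" and ?T = "T \<union> R \<times> {length w}"
  assume old: "?old \<and> ?R_rows"
  show ?new
    unfolding no_one_above_zero_def
  proof (intro allI impI notI)
    fix b r'
    assume zero: "(r, b) \<in> shifted_cells ?w - ?T" and one: "(r', b) \<in> ?T" and "row_above r' r"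
    show False
    proof (cases "b = ?n")
      case True
      then show False
        using old zero one \<open>row_above r' r\<close> T shifted_cellsD by blast
    next
      case False
      then show False
        using old zero one \<open>row_above r' r\<close> unfolding no_one_above_zero_def
        by (auto simp: mem_shifted_cells_snoc_False_iff)
    qed
  qed
qed

lemma no_one_above_zero_new_inserted_row:
  assumes T: "T \<subseteq> shifted_cells w" and R: "R \<subseteq> insert (Inr (length w)) (Collect (is_row w))"
  shows "no_one_above_zero (w @ [False]) (T \<union> R \<times> {length w}) (Inr (length w))"
proof -
  have "\<not> row_above r' (Inr (length w))" if "r' \<in> R" for r'
    using that R by (cases r') (auto simp: is_row_def)
  moreover have "(Inr (length w), b) \<notin> shifted_cells w" for b
    using shifted_cellsD not_is_row_length by blast
  ultimately show ?thesis
    using T shifted_cellsD by (fastforce simp: no_one_above_zero_def mem_shifted_cells_snoc_False_iff)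
qed

lemma unrestricted_rows_snoc_False:
  assumes T: "T \<subseteq> shifted_cells w" and R: "R \<subseteq> insert (Inr (length w)) (unrestricted_rows w T)"
  shows "unrestricted_rows (w @ [False]) (T \<union> R \<times> {length w}) =
    {r \<in> unrestricted_rows w T. r \<in> R \<or> (\<forall>r'\<in>R. \<not> row_above r' r)} \<union> R \<inter> {Inr (length w)}"
proof (rule set_eqI)
  fix r
  let ?n = "length w"
  have R_rows: "R \<subseteq> insert (Inr ?n) (Collect (is_row w))"
    using R by (auto simp: unrestricted_rows_def)
  have T_lt: "b < ?n" if "(r', b) \<in> T" for r' b
    using that T shifted_cellsD by blast
  consider "r = Inr ?n" | "is_row w r" | "\<not> is_row (w @ [False]) r"
    using is_row_snoc[of w False r] by auto
  then show "r \<in> unrestricted_rows (w @ [False]) (T \<union> R \<times> {?n}) \<longleftrightarrow>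
    r \<in> {r \<in> unrestricted_rows w T. r \<in> R \<or> (\<forall>r'\<in>R. \<not> row_above r' r)} \<union> R \<inter> {Inr ?n}"
  proof cases
    case 1
    then show ?thesis
      using no_one_above_zero_new_inserted_row[OF T R_rows] T_lt not_is_row_length
      by (auto simp: unrestricted_rows_def is_row_snoc)
  next
    case 2
    moreover have "r \<noteq> Inr ?n"
      using 2 not_is_row_length by blast
    ultimately show ?thesis
      using no_one_above_zero_snoc_False[OF T 2] by (auto simp: unrestricted_rows_def is_row_snoc)
  next
    case 3
    then show ?thesis
      by (auto simp: unrestricted_rows_def is_row_snoc)
  qed
qed

lemma unrestricted_rows_snoc_False_with_diagonal:
  assumes T: "T \<subseteq> shifted_cells w" and R: "R \<subseteq> unrestricted_rows w T"
  shows "unrestricted_rows (w @ [False]) (T \<union> insert (Inr (length w)) R \<times> {length w})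
    = insert (Inr (length w)) R"
proof -
  let ?F = "unrestricted_rows w T" and ?new = "Inr (length w)"
  have "?new \<notin> ?F" and "row_above ?new r" if "r \<in> ?F" for r
    using that not_is_row_length row_above_new_inserted_row by (auto simp: unrestricted_rows_def)
  then have "{r \<in> ?F. r \<in> insert ?new R \<or> (\<forall>r'\<in>insert ?new R. \<not> row_above r' r)} = R"
    using R by auto
  then show ?thesis
    using R unrestricted_rows_snoc_False[OF T, of "insert ?new R"] by auto
qed

definition new_column_choices :: "bool list \<Rightarrow> bcell set \<Rightarrow> brow set set" where
  "new_column_choices w T = {R. R \<noteq> {} \<and> R \<subseteq> insert (Inr (length w)) (unrestricted_rows w T)}"

lemma finite_new_column_choices: "finite (new_column_choices w T)"
  by (rule finite_subset[of _ "Pow (insert (Inr (length w)) (unrestricted_rows w T))"])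
    (auto simp: new_column_choices_def finite_unrestricted_rows)

lemma new_column_choices_eq:
  "new_column_choices w T =
     (Pow (unrestricted_rows w T) - {{}}) \<union> insert (Inr (length w)) ` Pow (unrestricted_rows w T)"
proof -
  have "new_column_choices w T = Pow (insert (Inr (length w)) (unrestricted_rows w T)) - {{}}"
    by (auto simp: new_column_choices_def)
  then show ?thesis
    by (auto simp: Pow_insert)
qed

lemma finite_typeB_tableaux: "finite (typeB_tableaux n)"
proof (rule finite_subset)
  let ?words = "{w. set w \<subseteq> (UNIV :: bool set) \<and> length w = n}"
  let ?cells = "\<Union>w\<in>?words. shifted_cells w"
  show "typeB_tableaux n \<subseteq> ?words \<times> Pow ?cells"
    by (auto simp: typeB_tableaux_def is_typeB_tableau_def)
  have "finite (shifted_cells w)" for w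
    by (rule finite_subset[of _ "Collect (is_row w) \<times> {..<length w}"])
      (auto simp: finite_rows dest: shifted_cellsD)
  moreover have "finite ?words"
    by (rule finite_lists_length_eq) simp
  ultimately show "finite (?words \<times> Pow ?cells)"
    by blast
qed

lemma Un_Times_last_column_eq_iff:
  assumes "T1 \<subseteq> shifted_cells w" and "T2 \<subseteq> shifted_cells w"
  shows "T1 \<union> R1 \<times> {length w} = T2 \<union> R2 \<times> {length w} \<longleftrightarrow> T1 = T2 \<and> R1 = R2"
proof -
  have recover: "T = {c \<in> T \<union> R \<times> {length w}. snd c < length w}"
    "R = {r. (r, length w) \<in> T \<union> R \<times> {length w}}"
    if "T \<subseteq> shifted_cells w" for T R
    using that shifted_cellsD by fastforce+
  show ?thesis
    using recover[OF assms(1), of R1] recover[OF assms(2), of R2] by auto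
qed

lemma split_last_column:
  assumes "T' \<subseteq> shifted_cells (w @ [False])"
  obtains T R where "T' = T \<union> R \<times> {length w}" and "T \<subseteq> shifted_cells w"
    and "R \<subseteq> insert (Inr (length w)) (Collect (is_row w))"
proof
  let ?T = "{c \<in> T'. snd c < length w}" and ?R = "{r. (r, length w) \<in> T'}"
  have "snd c \<le> length w" if "c \<in> T'" for c
    using that assms shifted_cellsD by (cases c) fastforce
  then show "T' = ?T \<union> ?R \<times> {length w}"
    by (force simp: le_less)
  show "?T \<subseteq> shifted_cells w" and "?R \<subseteq> insert (Inr (length w)) (Collect (is_row w))"
    using assms shifted_cellsD by (fastforce simp: mem_shifted_cells_snoc_False_iff)+
qed

lemma snoc_True_mem_typeB_tableaux_iff:
  "(w @ [True], T) \<in> typeB_tableaux (Suc n) \<longleftrightarrow> (w, T) \<in> typeB_tableaux n"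
  by (simp add: typeB_tableaux_def is_typeB_tableau_snoc_True)

lemma snoc_False_mem_typeB_tableaux_iff:
  "(w @ [False], T') \<in> typeB_tableaux (Suc n) \<longleftrightarrow>
    (\<exists>T R. T' = T \<union> R \<times> {n} \<and> (w, T) \<in> typeB_tableaux n \<and> R \<in> new_column_choices w T)"
proof
  assume T': "(w @ [False], T') \<in> typeB_tableaux (Suc n)"
  then have cells: "T' \<subseteq> shifted_cells (w @ [False])" and n: "n = length w"
    by (auto simp: typeB_tableaux_def is_typeB_tableau_def)
  from cells obtain T R where "T' = T \<union> R \<times> {length w}" and T: "T \<subseteq> shifted_cells w"
    and R: "R \<subseteq> insert (Inr (length w)) (Collect (is_row w))"
    by (rule split_last_column)
  then show "\<exists>T R. T' = T \<union> R \<times> {n} \<and> (w, T) \<in> typeB_tableaux n \<and> R \<in> new_column_choices w T"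
    using T' n is_typeB_tableau_snoc_False[OF T R]
    by (auto simp: typeB_tableaux_def new_column_choices_def)
next
  assume "\<exists>T R. T' = T \<union> R \<times> {n} \<and> (w, T) \<in> typeB_tableaux n \<and> R \<in> new_column_choices w T"
  then obtain T R where T': "T' = T \<union> R \<times> {length w}" and n: "n = length w"
    and T: "is_typeB_tableau w T" and R: "R \<in> new_column_choices w T"
    by (auto simp: typeB_tableaux_def)
  have "T \<subseteq> shifted_cells w" "R \<subseteq> insert (Inr (length w)) (Collect (is_row w))"
    using T R by (auto simp: is_typeB_tableau_def new_column_choices_def unrestricted_rows_def)
  then show "(w @ [False], T') \<in> typeB_tableaux (Suc n)"
    using T' n T R is_typeB_tableau_snoc_False
    by (auto simp: typeB_tableaux_def new_column_choices_def)
qed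

lemma typeB_tableaux_Suc:
  "typeB_tableaux (Suc n) =
     (\<lambda>(w, T). (w @ [True], T)) ` typeB_tableaux n \<union>
     (\<lambda>((w, T), R). (w @ [False], T \<union> R \<times> {n})) `
       Sigma (typeB_tableaux n) (case_prod new_column_choices)"
  (is "_ = ?south ` _ \<union> ?west ` ?choices")
proof (intro set_eqI iffI)
  fix x
  assume x: "x \<in> typeB_tableaux (Suc n)"
  then obtain w s T' where x_eq: "x = (w @ [s], T')"
    by (cases x) (auto simp: typeB_tableaux_def dest!: length_Suc_conv_rev[THEN iffD1])
  show "x \<in> ?south ` typeB_tableaux n \<union> ?west ` ?choices"
  proof (cases s)
    case True
    then have "(w, T') \<in> typeB_tableaux n"
      using x x_eq snoc_True_mem_typeB_tableaux_iff by simp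
    then show ?thesis
      using x_eq True by (auto intro: rev_image_eqI)
  next
    case False
    then obtain T R where "T' = T \<union> R \<times> {n}" and "((w, T), R) \<in> ?choices"
      using x x_eq snoc_False_mem_typeB_tableaux_iff by auto
    then show ?thesis
      using x_eq False by (auto intro: rev_image_eqI[of "((w, T), R)"])
  qed
next
  fix x
  assume "x \<in> ?south ` typeB_tableaux n \<union> ?west ` ?choices"
  then show "x \<in> typeB_tableaux (Suc n)"
    by (auto simp: snoc_True_mem_typeB_tableaux_iff snoc_False_mem_typeB_tableaux_iff) blast
qed

lemma sum_typeB_tableaux_Suc:
  "sum f (typeB_tableaux (Suc n)) = (\<Sum>(w, T)\<in>typeB_tableaux n.
     f (w @ [True], T) + (\<Sum>R\<in>new_column_choices w T. f (w @ [False], T \<union> R \<times> {n})))"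
proof -
  let ?south = "\<lambda>(w, T). (w @ [True], T)" and ?west = "\<lambda>((w, T), R). (w @ [False], T \<union> R \<times> {n})"
  let ?choices = "Sigma (typeB_tableaux n) (case_prod new_column_choices)"
  have finite_choices: "finite ?choices"
    by (auto intro: finite_SigmaI finite_typeB_tableaux finite_new_column_choices)
  have "inj_on ?west ?choices"
    by (auto intro!: inj_onI simp: typeB_tableaux_def is_typeB_tableau_def
        dest: Un_Times_last_column_eq_iff[THEN iffD1, rotated 2])
  moreover have "inj_on ?south (typeB_tableaux n)"
    by (auto intro!: inj_onI)
  moreover have "?south ` typeB_tableaux n \<inter> ?west ` ?choices = {}"
    by auto
  ultimately have "sum f (typeB_tableaux (Suc n)) =
      (\<Sum>x\<in>typeB_tableaux n. f (?south x)) + (\<Sum>y\<in>?choices. f (?west y))"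
    unfolding typeB_tableaux_Suc
    by (simp add: sum.union_disjoint finite_typeB_tableaux finite_choices sum.reindex)
  also have "(\<Sum>y\<in>?choices. f (?west y)) = (\<Sum>(x, R)\<in>?choices. f (?west (x, R)))"
    by (intro sum.cong refl) (simp add: split_def)
  also have "\<dots> = (\<Sum>x\<in>typeB_tableaux n. \<Sum>R\<in>case_prod new_column_choices x. f (?west (x, R)))"
    by (rule sum.Sigma[symmetric]) (auto simp: finite_typeB_tableaux finite_new_column_choices)
  finally show ?thesis
    by (simp add: split_def sum.distrib)
qed

section \<open>Generating functions\<close>

lemma sum_power_new_column_choices:
  fixes y :: "'a :: comm_ring_1"
  assumes T: "T \<subseteq> shifted_cells w"
  defines "u \<equiv> card (unrestricted_rows w T)"
  shows "(\<Sum>R\<in>new_column_choices w T.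
      y ^ card (unrestricted_rows (w @ [False]) (T \<union> R \<times> {length w})))
    = 2 * y * (1 + y) ^ u - y ^ Suc u"
proof -
  let ?F = "unrestricted_rows w T" and ?new = "Inr (length w)"
  let ?g = "\<lambda>R. y ^ card (unrestricted_rows (w @ [False]) (T \<union> R \<times> {length w}))"
  have new_notin: "?new \<notin> ?F"
    using not_is_row_length by (auto simp: unrestricted_rows_def)
  have without_new: "?g R = y ^ card {r \<in> ?F. r \<in> R \<or> (\<forall>r'\<in>R. \<not> row_rank r' < row_rank r)}"
    if "R \<in> Pow ?F - {{}}" for R
  proof -
    have "R \<subseteq> insert ?new ?F" and "R \<inter> {?new} = {}"
      using that new_notin by auto
    then show ?thesis
      using unrestricted_rows_snoc_False[OF T] by (simp add: row_above_iff_row_rank)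
  qed
  have with_new: "?g (insert ?new R) = y * y ^ card R" if "R \<in> Pow ?F" for R
  proof -
    have "finite R" "?new \<notin> R"
      using that new_notin finite_subset[OF _ finite_unrestricted_rows] by auto
    then show ?thesis
      using that unrestricted_rows_snoc_False_with_diagonal[OF T] by simp
  qed
  have inj: "inj_on (insert ?new) (Pow ?F)"
  proof (rule inj_onI)
    fix A B
    assume "A \<in> Pow ?F" "B \<in> Pow ?F" "insert ?new A = insert ?new B"
    then show "A = B"
      using new_notin insert_ident[of ?new A B] by blast
  qed
  have "sum ?g (new_column_choices w T) = sum ?g (Pow ?F - {{}}) + sum ?g (insert ?new ` Pow ?F)"
    unfolding new_column_choices_eq using new_notin finite_unrestricted_rows
    by (intro sum.union_disjoint) auto
  also have "sum ?g (Pow ?F - {{}}) = y * (1 + y) ^ u - y ^ Suc u"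
    using sum_power_card_not_preceded[OF finite_unrestricted_rows inj_on_subset[OF inj_row_rank]]
      without_new u_def by simp
  also have "sum ?g (insert ?new ` Pow ?F) = (\<Sum>R\<in>Pow ?F. y * y ^ card R)"
    using inj with_new by (simp add: sum.reindex)
  also have "\<dots> = y * (1 + y) ^ u"
    by (simp add: sum_distrib_left[symmetric] sum_power_card_Pow finite_unrestricted_rows u_def)
  finally show ?thesis
    by (simp add: algebra_simps)
qed

lemma sum_power_unrestricted_rows_children:
  fixes y :: "'a :: comm_ring_1"
  assumes "(w, T) \<in> typeB_tableaux n"
  shows "y ^ card (unrestricted_rows (w @ [True]) T)
      + (\<Sum>R\<in>new_column_choices w T. y ^ card (unrestricted_rows (w @ [False]) (T \<union> R \<times> {n})))
    = 2 * y * (1 + y) ^ card (unrestricted_rows w T)"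
proof -
  have T: "T \<subseteq> shifted_cells w" and n: "n = length w"
    using assms by (auto simp: typeB_tableaux_def is_typeB_tableau_def)
  show ?thesis
    unfolding n sum_power_new_column_choices[OF T] card_unrestricted_rows_snoc_True[OF T] by simp
qed

lemma south_steps_snoc: "south_steps (w @ [s]) = south_steps w + (if s then 1 else 0)"
  by (simp add: south_steps_def)

definition tableaux_gf :: "nat \<Rightarrow> real \<Rightarrow> real" where
  "tableaux_gf n y = (\<Sum>(w, T)\<in>typeB_tableaux n. y ^ card (unrestricted_rows w T))"

definition south_steps_gf :: "nat \<Rightarrow> real \<Rightarrow> real" where
  "south_steps_gf n y =
     (\<Sum>(w, T)\<in>typeB_tableaux n. real (south_steps w) * y ^ card (unrestricted_rows w T))"

lemma tableaux_gf_Suc: "tableaux_gf (Suc n) y = 2 * y * tableaux_gf n (1 + y)"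
  unfolding tableaux_gf_def sum_typeB_tableaux_Suc sum_distrib_left
  by (intro sum.cong refl) (auto simp: sum_power_unrestricted_rows_children)

lemma south_steps_gf_Suc:
  "south_steps_gf (Suc n) y = 2 * y * south_steps_gf n (1 + y) + y * tableaux_gf n y"
proof -
  have "real (south_steps (w @ [True])) * y ^ card (unrestricted_rows (w @ [True]) T)
      + (\<Sum>R\<in>new_column_choices w T. real (south_steps (w @ [False]))
          * y ^ card (unrestricted_rows (w @ [False]) (T \<union> R \<times> {n})))
    = 2 * y * (real (south_steps w) * (1 + y) ^ card (unrestricted_rows w T))
      + y * y ^ card (unrestricted_rows w T)"
    if "(w, T) \<in> typeB_tableaux n" for w T
  proof -
    have "card (unrestricted_rows (w @ [True]) T) = Suc (card (unrestricted_rows w T))"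
      using that by (simp add: card_unrestricted_rows_snoc_True typeB_tableaux_def is_typeB_tableau_def)
    then show ?thesis
      using arg_cong[OF sum_power_unrestricted_rows_children[OF that, of y],
          of "\<lambda>t. real (south_steps w) * t"]
      by (simp add: south_steps_snoc sum_distrib_left[symmetric] algebra_simps)
  qed
  then show ?thesis
    unfolding south_steps_gf_def tableaux_gf_def sum_typeB_tableaux_Suc sum_distrib_left
      sum.distrib[symmetric]
    by (intro sum.cong refl) auto
qed

lemma typeB_tableaux_0: "typeB_tableaux 0 = {([], {})}"
  by (auto simp: typeB_tableaux_def is_typeB_tableau_def shifted_cells_def)

lemma tableaux_gf_eq_pochhammer: "tableaux_gf n y = 2 ^ n * pochhammer y n"
proof (induction n arbitrary: y)
  case 0
  have "unrestricted_rows [] {} = {}"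
    by (auto simp: unrestricted_rows_def is_row_def split: sum.splits)
  then show ?case
    by (simp add: tableaux_gf_def typeB_tableaux_0)
next
  case (Suc n)
  then show ?case
    by (simp add: tableaux_gf_Suc pochhammer_rec add.commute)
qed

lemma south_steps_gf_eq_pochhammer:
  "4 * south_steps_gf n y = 2 ^ n * real n * (2 * y + real n - 1) * pochhammer y (n - 1)"
proof (induction n arbitrary: y)
  case 0
  then show ?case
    by (simp add: south_steps_gf_def typeB_tableaux_0 south_steps_def)
next
  case (Suc n)
  have "4 * south_steps_gf (Suc n) y = 2 * y * (4 * south_steps_gf n (1 + y)) + 4 * y * tableaux_gf n y"
    by (simp add: south_steps_gf_Suc algebra_simps)
  also have "\<dots> = 2 * y * (2 ^ n * real n * (2 * (1 + y) + real n - 1) * pochhammer (1 + y) (n - 1))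
      + 4 * y * (2 ^ n * pochhammer y n)"
    by (simp only: Suc tableaux_gf_eq_pochhammer)
  also have "\<dots> = 2 ^ Suc n * real (Suc n) * (2 * y + real (Suc n) - 1) * pochhammer y n"
  proof (cases n)
    case (Suc m)
    then have "pochhammer y n = y * pochhammer (1 + y) m"
      by (simp add: pochhammer_rec add.commute)
    then show ?thesis
      using Suc by (simp add: algebra_simps)
  qed simp
  finally show ?case
    by simp
qed

lemma card_typeB_tableaux: "card (typeB_tableaux n) = 2 ^ n * fact n"
proof -
  have "real (card (typeB_tableaux n)) = tableaux_gf n 1"
    by (simp add: tableaux_gf_def)
  also have "\<dots> = real (2 ^ n * fact n)"
    by (simp add: tableaux_gf_eq_pochhammer flip: pochhammer_fact)
  finally show ?thesis
    by (simp only: of_nat_eq_iff)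
qed

lemma sum_south_steps_typeB_tableaux:
  "4 * (\<Sum>(w, T)\<in>typeB_tableaux n. real (south_steps w)) = 2 ^ n * real n * (real n + 1) * fact (n - 1)"
proof -
  have "(\<Sum>(w, T)\<in>typeB_tableaux n. real (south_steps w)) = south_steps_gf n 1"
    by (simp add: south_steps_gf_def)
  then show ?thesis
    using south_steps_gf_eq_pochhammer[of n 1] by (simp add: pochhammer_fact)
qed

theorem mainTheorem4:
  fixes n :: nat
  assumes "n \<ge> 1"
  shows "measure_pmf.expectation (pmf_of_set (typeB_tableaux n))
           (\<lambda>(w, T). real (south_steps w)) = (real n + 1) / 4"
proof -
  have card_pos: "card (typeB_tableaux n) > 0"
    by (simp add: card_typeB_tableaux)
  then have "measure_pmf.expectation (pmf_of_set (typeB_tableaux n)) (\<lambda>(w, T). real (south_steps w))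
      = (\<Sum>(w, T)\<in>typeB_tableaux n. real (south_steps w)) / card (typeB_tableaux n)"
    by (simp add: integral_pmf_of_set card_gt_0_iff)
  moreover have "(\<Sum>(w, T)\<in>typeB_tableaux n. real (south_steps w))
      = real (card (typeB_tableaux n)) * (real n + 1) / 4"
    using sum_south_steps_typeB_tableaux[of n] assms
    by (simp add: card_typeB_tableaux fact_reduce field_simps)
  ultimately show ?thesis
    using card_pos by simp
qed

end
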